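(* Let $n\ge 3$ be odd and let $D_{2n}$ be the dihedral group of order $2n$. Then $\Gamma_{D_{2n},H}$ admits a perfect code for every normal subgroup $H$ of $D_{2n}$.
   Context: For a normal subgroup $H$ of a finite group $G$ with identity $e$, the subgroup sum graph $\Gamma_{G,H}$ is the simple undirected graph with vertex set $G$ in which distinct vertices $x,y$ are adjacent if and only if $xy\in H\setminus\{e\}$. A perfect code in a graph is a set $C$ of vertices that is independent and such that every vertex not in $C$ is adjacent to exactly one vertex of $C$. *)

theory Defs
  imports "HOL-Algebra.Algebra"
begin

text \<open>Dihedral group of order 2n: the element (i, a) stands for r^i s^a
  (r a rotation of order n, s a reflection), with s r^j = r^(-j) s.\<close>
definition dihedral_group :: "nat \<Rightarrow> (nat \<times> bool) monoid" where
  "dihedral_group n =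
     \<lparr> carrier = {0..<n} \<times> UNIV,
       monoid.mult = (\<lambda>(i, a) (j, b). ((if a then i + (n - j) else i + j) mod n, a \<noteq> b)),
       monoid.one = (0, False) \<rparr>"

definition sum_graph_adj :: "('a, 'b) monoid_scheme \<Rightarrow> 'a set \<Rightarrow> 'a \<Rightarrow> 'a \<Rightarrow> bool" where
  "sum_graph_adj G H x y \<longleftrightarrow>
     x \<in> carrier G \<and> y \<in> carrier G \<and> x \<noteq> y \<and>
     x \<otimes>\<^bsub>G\<^esub> y \<in> H - {\<one>\<^bsub>G\<^esub>}"

definition perfect_code :: "'a set \<Rightarrow> ('a \<Rightarrow> 'a \<Rightarrow> bool) \<Rightarrow> 'a set \<Rightarrow> bool" where
  "perfect_code V E C \<longleftrightarrow>
     C \<subseteq> V \<and>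
     (\<forall>x\<in>C. \<forall>y\<in>C. \<not> E x y) \<and>
     (\<forall>v\<in>V - C. \<exists>!c. c \<in> C \<and> E v c)"

end

theory Submission
  imports Defs
begin

text \<open>
  If a normal subgroup H of D_2n contains a reflection, then, n being odd, conjugation
  produces every reflection, so H is the whole group and {1} is a perfect code.
  Otherwise H = {r^x | x \<in> K} for a subgroup K of the integers containing n. Then
  r^x s^a and r^y s^b are adjacent only if a = b and x' - y lies in K and is nonzero
  modulo n, where x' = x for reflections and x' = -x for rotations. Hence for any
  transversal T of the cosets of K that is closed under negation,
  {r^t s^a | t \<in> T} is a perfect code. Such a T is given by the elements of least
  absolute value in their cosets: if t and -t lie in the same coset then 2t \<in> K, and as
  K contains the odd number n this forces t \<in> K, i.e. t = 0.
\<close>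

lemma subgroup_integer_group_add_closed:
  "subgroup K integer_group \<Longrightarrow> x \<in> K \<Longrightarrow> y \<in> K \<Longrightarrow> x + y \<in> K"
  using subgroup.m_closed by fastforce

lemma subgroup_integer_group_uminus_closed:
  "subgroup K integer_group \<Longrightarrow> x \<in> K \<Longrightarrow> - x \<in> K"
  using subgroup.m_inv_closed[of K integer_group x] by simp

lemma subgroup_integer_group_mult_closed:
  assumes "subgroup K integer_group" "x \<in> K"
  shows "c * x \<in> K"
  using group.subgroup_int_pow_closed[OF group_integer_group assms, of c] by simp

lemma subgroup_integer_group_half:
  assumes K: "subgroup K integer_group" and "odd n" "n \<in> K" "2 * x \<in> K"
  shows "x \<in> K"
proof -
  obtain m where "n = 2 * m + 1" using \<open>odd n\<close> oddE by blast
  then have "x = (m + 1) * (2 * x) + (- x) * n" by (simp add: algebra_simps)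
  also have "\<dots> \<in> K"
    by (rule subgroup_integer_group_add_closed[OF K
          subgroup_integer_group_mult_closed[OF K assms(4)] subgroup_integer_group_mult_closed[OF K assms(3)]])
  finally show ?thesis .
qed

definition least_abs_reps :: "int set \<Rightarrow> int set" where
  "least_abs_reps K = {t. \<forall>y. t - y \<in> K \<longrightarrow> \<bar>t\<bar> \<le> \<bar>y\<bar>}"

lemma least_abs_repsD: "t \<in> least_abs_reps K \<Longrightarrow> t - y \<in> K \<Longrightarrow> \<bar>t\<bar> \<le> \<bar>y\<bar>"
  by (simp add: least_abs_reps_def)

lemma uminus_least_abs_reps:
  assumes K: "subgroup K integer_group" and t: "t \<in> least_abs_reps K"
  shows "- t \<in> least_abs_reps K"
  unfolding least_abs_reps_def
proof (intro CollectI allI impI)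
  fix y assume "- t - y \<in> K"
  have "t - (- y) = - (- t - y)" by simp
  with subgroup_integer_group_uminus_closed[OF K \<open>- t - y \<in> K\<close>]
  have "t - (- y) \<in> K" by (simp only:)
  then have "\<bar>t\<bar> \<le> \<bar>- y\<bar>" by (rule least_abs_repsD[OF t])
  then show "\<bar>- t\<bar> \<le> \<bar>y\<bar>" by simp
qed

lemma ex_least_abs_rep:
  assumes K: "subgroup K integer_group"
  shows "\<exists>t \<in> least_abs_reps K. x - t \<in> K"
proof -
  have "x - x \<in> K" using subgroup.one_closed[OF K] by simp
  then obtain t where t: "x - t \<in> K" and least: "\<And>y. x - y \<in> K \<Longrightarrow> nat \<bar>t\<bar> \<le> nat \<bar>y\<bar>"
    using ex_has_least_nat[of "\<lambda>y. x - y \<in> K" x "\<lambda>y. nat \<bar>y\<bar>"] by blast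
  have "\<bar>t\<bar> \<le> \<bar>y\<bar>" if "t - y \<in> K" for y
  proof -
    have "(x - t) + (t - y) \<in> K" using subgroup_integer_group_add_closed[OF K t that] .
    then have "nat \<bar>t\<bar> \<le> nat \<bar>y\<bar>" using least by simp
    then show ?thesis by simp
  qed
  then have "t \<in> least_abs_reps K" by (simp add: least_abs_reps_def)
  then show ?thesis using t by blast
qed

lemma least_abs_reps_unique:
  assumes K: "subgroup K integer_group" and "odd n" "n \<in> K"
    and t: "t \<in> least_abs_reps K" and u: "u \<in> least_abs_reps K" and tu: "t - u \<in> K"
  shows "t = u"
proof -
  have "u - t \<in> K" using subgroup_integer_group_uminus_closed[OF K tu] by simp
  from least_abs_repsD[OF t tu] least_abs_repsD[OF u this] have "\<bar>t\<bar> = \<bar>u\<bar>" by simp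
  then consider "t = u" | "u = - t" by (auto simp: abs_eq_iff)
  then show ?thesis
  proof cases
    case 2
    with tu have "2 * t \<in> K" by simp
    then have "t \<in> K" by (rule subgroup_integer_group_half[OF K \<open>odd n\<close> \<open>n \<in> K\<close>])
    with least_abs_repsD[OF t, of 0] have "t = 0" by simp
    with \<open>u = - t\<close> show ?thesis by simp
  qed
qed

lemma (in group) perfect_code_sum_graph_carrier:
  "perfect_code (carrier G) (sum_graph_adj G (carrier G)) {\<one>}"
  unfolding perfect_code_def
proof (intro conjI ballI)
  fix v assume v: "v \<in> carrier G - {\<one>}"
  then have "sum_graph_adj G (carrier G) v \<one>" by (simp add: sum_graph_adj_def)
  then show "\<exists>!c. c \<in> {\<one>} \<and> sum_graph_adj G (carrier G) v c" by blast
qed (auto simp: sum_graph_adj_def)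

definition dih :: "nat \<Rightarrow> int \<Rightarrow> bool \<Rightarrow> nat \<times> bool" where
  "dih n x a = (nat (x mod int n), a)"

lemma dih_in_carrier: "0 < n \<Longrightarrow> dih n x a \<in> carrier (dihedral_group n)"
  by (simp add: dih_def dihedral_group_def nat_less_iff)

lemma dih_fst_snd: "v \<in> carrier (dihedral_group n) \<Longrightarrow> v = dih n (int (fst v)) (snd v)"
  by (auto simp: dih_def dihedral_group_def)

lemma dih_eq_iff: "0 < n \<Longrightarrow> dih n x a = dih n y b \<longleftrightarrow> x mod int n = y mod int n \<and> a = b"
  by (simp add: dih_def nat_eq_iff)

lemma dih_one: "\<one>\<^bsub>dihedral_group n\<^esub> = dih n 0 False"
  by (simp add: dih_def dihedral_group_def)

lemma dih_mult:
  assumes "0 < n"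
  shows "dih n x a \<otimes>\<^bsub>dihedral_group n\<^esub> dih n y b = dih n (if a then x - y else x + y) (a \<noteq> b)"
proof -
  let ?i = "nat (x mod int n)" and ?j = "nat (y mod int n)"
  have i: "int ?i = x mod int n" and j: "int ?j = y mod int n" "?j \<le> n"
    using assms by (simp_all add: nat_le_iff order.strict_implies_order)
  have "int ((?i + (n - ?j)) mod n) = ((x mod int n - y mod int n) + int n) mod int n"
    using i j by (simp add: zmod_int of_nat_diff algebra_simps)
  also have "\<dots> = (x - y) mod int n"
    by (simp add: mod_diff_eq)
  finally have "int ((?i + (n - ?j)) mod n) = (x - y) mod int n" .
  moreover have "int ((?i + ?j) mod n) = (x + y) mod int n"
    using i j by (simp add: zmod_int mod_add_eq)
  ultimately show ?thesis
    by (auto simp: dihedral_group_def dih_def simp flip: nat_int)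
qed

lemma normal_reflection_imp_carrier:
  assumes "odd n" and N: "H \<lhd> dihedral_group n" and "(i, True) \<in> H"
  shows "H = carrier (dihedral_group n)"
proof -
  interpret N: normal H "dihedral_group n" by (rule N)
  have n: "0 < n" using \<open>odd n\<close> by (simp add: odd_pos)
  have i: "dih n (int i) True \<in> H"
    using N.subset \<open>(i, True) \<in> H\<close> dih_fst_snd by fastforce
  have refl: "dih n k True \<in> H" for k
  proof -
    \<comment> \<open>conjugation by r^j s sends r^i s to r^(2j-i) s, and 2 is invertible modulo n\<close>
    define j where "j = (int i + k) * ((int n + 1) div 2)"
    obtain m where "n = 2 * m + 1" using \<open>odd n\<close> oddE by blast
    then have "2 * j - int i = k + (int i + k) * int n" by (simp add: j_def algebra_simps)
    then have conj: "dih n (2 * j - int i) True = dih n k True"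
      using n by (simp add: dih_eq_iff)
    have inv: "inv\<^bsub>dihedral_group n\<^esub> dih n j True = dih n j True"
      using n by (intro N.inv_equality) (simp_all add: dih_mult dih_one dih_in_carrier)
    have "dih n j True \<otimes>\<^bsub>dihedral_group n\<^esub> dih n (int i) True
        \<otimes>\<^bsub>dihedral_group n\<^esub> inv\<^bsub>dihedral_group n\<^esub> dih n j True \<in> H"
      using N.inv_op_closed2[OF dih_in_carrier[OF n] i] .
    then show ?thesis using n conj by (simp add: inv dih_mult)
  qed
  have "dih n k a \<in> H" for k a
  proof (cases a)
    case False
    have "dih n k True \<otimes>\<^bsub>dihedral_group n\<^esub> dih n 0 True \<in> H"
      using refl by (simp add: N.m_closed)
    then show ?thesis using n False by (simp add: dih_mult)
  qed (use refl in simp)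
  then have "carrier (dihedral_group n) \<subseteq> H" using dih_fst_snd by (metis subsetI)
  then show ?thesis using N.subset by (rule subset_antisym[rotated])
qed

definition rotation_exponents :: "nat \<Rightarrow> (nat \<times> bool) set \<Rightarrow> int set" where
  "rotation_exponents n H = {x. dih n x False \<in> H}"

lemma subgroup_rotation_exponents:
  assumes "0 < n" "group (dihedral_group n)" "subgroup H (dihedral_group n)"
  shows "subgroup (rotation_exponents n H) integer_group"
proof (rule group.subgroupI[OF group_integer_group])
  interpret G: group "dihedral_group n" by fact
  show "rotation_exponents n H \<noteq> {}"
    using subgroup.one_closed[OF assms(3)] by (auto simp: rotation_exponents_def dih_one)
  fix x y assume "x \<in> rotation_exponents n H" "y \<in> rotation_exponents n H"
  then have x: "dih n x False \<in> H" and y: "dih n y False \<in> H"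
    by (simp_all add: rotation_exponents_def)
  from subgroup.m_closed[OF assms(3) x y]
  show "x \<otimes>\<^bsub>integer_group\<^esub> y \<in> rotation_exponents n H"
    using assms(1) by (simp add: rotation_exponents_def dih_mult)
  have "inv\<^bsub>dihedral_group n\<^esub> dih n x False = dih n (- x) False"
    using assms(1) by (intro G.inv_equality) (simp_all add: dih_mult dih_one dih_in_carrier)
  with subgroup.m_inv_closed[OF assms(3) x]
  show "inv\<^bsub>integer_group\<^esub> x \<in> rotation_exponents n H"
    by (simp add: rotation_exponents_def)
qed simp

lemma modulus_in_rotation_exponents:
  assumes "0 < n" "subgroup H (dihedral_group n)"
  shows "int n \<in> rotation_exponents n H"
proof -
  have "dih n (int n) False = \<one>\<^bsub>dihedral_group n\<^esub>"
    using assms(1) by (simp add: dih_one dih_eq_iff)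
  with subgroup.one_closed[OF assms(2)] show ?thesis
    by (simp add: rotation_exponents_def)
qed

lemma sum_graph_adj_dih:
  assumes n: "0 < n" and K: "subgroup (rotation_exponents n H) integer_group"
    and no_refl: "\<And>i. (i, True) \<notin> H"
  shows "sum_graph_adj (dihedral_group n) H (dih n x a) (dih n y b) \<longleftrightarrow>
    a = b \<and> x mod int n \<noteq> y mod int n \<and>
    (if a then x else - x) - y \<in> rotation_exponents n H \<and> ((if a then x else - x) - y) mod int n \<noteq> 0"
proof (cases "a = b")
  case False
  then have "dih n x a \<otimes>\<^bsub>dihedral_group n\<^esub> dih n y b = dih n (if a then x - y else x + y) True"
    by (simp add: dih_mult[OF n])
  then have "dih n x a \<otimes>\<^bsub>dihedral_group n\<^esub> dih n y b \<notin> H"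
    using no_refl by (simp add: dih_def)
  then show ?thesis using False by (simp add: sum_graph_adj_def)
next
  case True
  have "dih n (x + y) False \<in> H \<longleftrightarrow> - x - y \<in> rotation_exponents n H"
    using subgroup_integer_group_uminus_closed[OF K, of "x + y"]
      subgroup_integer_group_uminus_closed[OF K, of "- x - y"]
    by (auto simp: rotation_exponents_def add.commute)
  moreover have "(x + y) mod int n = 0 \<longleftrightarrow> (- x - y) mod int n = 0"
    using dvd_minus_iff[of "int n" "x + y"] by (simp add: dvd_eq_mod_eq_0)
  moreover have "dih n (x - y) False \<in> H \<longleftrightarrow> x - y \<in> rotation_exponents n H"
    by (simp add: rotation_exponents_def)
  ultimately show ?thesis using True n
    by (cases a) (simp_all add: sum_graph_adj_def dih_mult dih_one dih_in_carrier dih_eq_iff)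
qed

definition rotation_code :: "nat \<Rightarrow> (nat \<times> bool) set \<Rightarrow> (nat \<times> bool) set" where
  "rotation_code n H = {dih n t a |t a. t \<in> least_abs_reps (rotation_exponents n H)}"

locale dihedral_rotation_subgroup =
  fixes n :: nat and H :: "(nat \<times> bool) set"
  assumes odd_n: "odd n"
    and group_dihedral: "group (dihedral_group n)"
    and subgroup_H: "subgroup H (dihedral_group n)"
    and no_reflection: "\<And>i. (i, True) \<notin> H"
begin

lemma n_pos: "0 < n"
  using odd_n by (simp add: odd_pos)

lemma subgroup_exponents: "subgroup (rotation_exponents n H) integer_group"
  by (rule subgroup_rotation_exponents[OF n_pos group_dihedral subgroup_H])

lemmas sum_graph_adj_dih_iff = sum_graph_adj_dih[OF n_pos subgroup_exponents no_reflection]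

lemma least_abs_rep_eq:
  assumes "t \<in> least_abs_reps (rotation_exponents n H)" "u \<in> least_abs_reps (rotation_exponents n H)"
    and "t - u \<in> rotation_exponents n H"
  shows "t = u"
proof -
  have "odd (int n)" using odd_n by simp
  with modulus_in_rotation_exponents[OF n_pos subgroup_H] show ?thesis
    using least_abs_reps_unique[OF subgroup_exponents] assms by blast
qed

lemma signed_least_abs_rep:
  "t \<in> least_abs_reps (rotation_exponents n H) \<Longrightarrow>
    (if a then t else - t) \<in> least_abs_reps (rotation_exponents n H)"
  using uminus_least_abs_reps[OF subgroup_exponents, of t] by simp

lemma rotation_code_independent:
  assumes "c \<in> rotation_code n H" "d \<in> rotation_code n H"
  shows "\<not> sum_graph_adj (dihedral_group n) H c d"
proof
  obtain t a u b where c: "c = dih n t a" "t \<in> least_abs_reps (rotation_exponents n H)"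
    and d: "d = dih n u b" "u \<in> least_abs_reps (rotation_exponents n H)"
    using assms by (auto simp: rotation_code_def)
  assume "sum_graph_adj (dihedral_group n) H c d"
  then have "(if a then t else - t) - u \<in> rotation_exponents n H"
    and "((if a then t else - t) - u) mod int n \<noteq> 0"
    using c d sum_graph_adj_dih_iff by auto
  moreover from this(1) have "(if a then t else - t) = u"
    by (rule least_abs_rep_eq[OF signed_least_abs_rep[OF c(2)] d(2)])
  ultimately show False by simp
qed

lemma rotation_code_dominating:
  assumes v: "v \<in> carrier (dihedral_group n) - rotation_code n H"
  shows "\<exists>!c. c \<in> rotation_code n H \<and> sum_graph_adj (dihedral_group n) H v c"
proof -
  define x a where "x = int (fst v)" and "a = snd v"
  let ?s = "\<lambda>z. if a then z else - z :: int"
  have v_eq: "v = dih n x a" unfolding x_def a_def by (rule dih_fst_snd) (use v in blast)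
  obtain t where t: "t \<in> least_abs_reps (rotation_exponents n H)" "?s x - t \<in> rotation_exponents n H"
    using ex_least_abs_rep[OF subgroup_exponents] by blast
  have t_code: "dih n t a \<in> rotation_code n H" "dih n (?s t) a \<in> rotation_code n H"
    unfolding rotation_code_def using t(1) signed_least_abs_rep[OF t(1)] by blast+
  then have "v \<noteq> dih n t a" "v \<noteq> dih n (?s t) a" using v by blast+
  then have "x mod int n \<noteq> t mod int n" "x mod int n \<noteq> ?s t mod int n"
    by (simp_all add: v_eq dih_eq_iff[OF n_pos])
  moreover have "(?s x - t) mod int n \<noteq> 0"
  proof
    assume "(?s x - t) mod int n = 0"
    then have "?s x mod int n = t mod int n" by (simp add: mod_eq_dvd_iff mod_eq_0_iff_dvd)
    then have "x mod int n = ?s t mod int n"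
      using mod_minus_cong[of "- x" "int n" t] by (cases a) simp_all
    with \<open>x mod int n \<noteq> ?s t mod int n\<close> show False by simp
  qed
  ultimately have "sum_graph_adj (dihedral_group n) H v (dih n t a)"
    using t(2) by (simp add: v_eq sum_graph_adj_dih_iff)
  moreover have "c = dih n t a"
    if "c \<in> rotation_code n H" "sum_graph_adj (dihedral_group n) H v c" for c
  proof -
    obtain u b where c: "c = dih n u b" "u \<in> least_abs_reps (rotation_exponents n H)"
      using \<open>c \<in> rotation_code n H\<close> by (auto simp: rotation_code_def)
    then have "b = a" and u: "?s x - u \<in> rotation_exponents n H"
      using that(2) by (auto simp: v_eq sum_graph_adj_dih_iff)
    have "- (?s x - t) + (?s x - u) \<in> rotation_exponents n H"
      using subgroup_integer_group_add_closed[OF subgroup_exponents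
          subgroup_integer_group_uminus_closed[OF subgroup_exponents t(2)] u] .
    then have "t = u" using least_abs_rep_eq[OF t(1) c(2)] by simp
    with c \<open>b = a\<close> show ?thesis by simp
  qed
  ultimately show ?thesis using t_code(1) by blast
qed

lemma perfect_code_rotation_code:
  "perfect_code (carrier (dihedral_group n)) (sum_graph_adj (dihedral_group n) H) (rotation_code n H)"
  unfolding perfect_code_def
  using dih_in_carrier[OF n_pos] rotation_code_independent rotation_code_dominating
  by (auto simp: rotation_code_def)

end

theorem proposition4p2:
  fixes n :: nat and H :: "(nat \<times> bool) set"
  assumes "odd n" and "n \<ge> 3"
    and "H \<lhd> dihedral_group n"
  shows "\<exists>C. perfect_code (carrier (dihedral_group n)) (sum_graph_adj (dihedral_group n) H) C"
proof (cases "\<exists>i. (i, True) \<in> H")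
  case True
  then have "H = carrier (dihedral_group n)"
    using normal_reflection_imp_carrier[OF \<open>odd n\<close> \<open>H \<lhd> dihedral_group n\<close>] by blast
  then show ?thesis
    using group.perfect_code_sum_graph_carrier normal.axioms(2)[OF \<open>H \<lhd> dihedral_group n\<close>] by blast
next
  case False
  then have "\<And>i. (i, True) \<notin> H" by blast
  then interpret dihedral_rotation_subgroup n H
    by (rule dihedral_rotation_subgroup.intro[OF \<open>odd n\<close> normal.axioms(2,1)[OF \<open>H \<lhd> dihedral_group n\<close>]])
  show ?thesis using perfect_code_rotation_code by blast
qed

end
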